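(* Let $N\in\mathbb{N}$ with $N\ge3$ and $n\in\mathbb{N}$ with $n\ge n_N$. Then there is a real $E$ with $|E|\le\frac{2\cdot10^{-2}}{24^{N/2}}n^{-\frac{N+2}{2}}$ such that \[ e^{\frac{\pi\sqrt{24n+1}}{3\sqrt2}}=e^{2\pi\sqrt{\frac n3}}\left(\sum_{m=0}^{N+1}\frac{b(m)}{n^{\frac m2}}+E\right). \]
   Context: $n_N:=\left(\frac{3(3N+4)\log(6N+8)}{1.3^2}\right)^4$. For $m\in\mathbb{N}_0$: $e_1(0):=1$, $e_1(m):=\frac{(2m-1)!}{(-96)^m}\sum_{\nu=1}^{m}\frac{(-\pi^2/18)^\nu}{(2\nu-1)!(\nu+m)!(m-\nu)!}$ for $m\ge1$; $o_1(m):=\frac{\pi(2m)!}{24\sqrt3(-96)^m}\sum_{\nu=0}^{m}\frac{(-\pi^2/18)^\nu}{(2\nu)!(m-\nu)!(\nu+m+1)!}$; and $b(2m):=e_1(m)$, $b(2m+1):=o_1(m)$. *)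

theory Defs
  imports "HOL-Analysis.Analysis"
begin

definition nN :: "nat \<Rightarrow> real" where
  "nN N = ((3 * (3 * real N + 4) * ln (6 * real N + 8)) / (1.3 ^ 2)) ^ 4"

definition e1 :: "nat \<Rightarrow> real" where
  "e1 m = (if m = 0 then 1 else
     fact (2*m - 1) / (-96) ^ m *
     (\<Sum>\<nu>=1..m. (-(pi^2)/18) ^ \<nu> / (fact (2*\<nu> - 1) * fact (\<nu> + m) * fact (m - \<nu>))))"

definition o1 :: "nat \<Rightarrow> real" where
  "o1 m = pi * fact (2*m) / (24 * sqrt 3 * (-96) ^ m) *
     (\<Sum>\<nu>=0..m. (-(pi^2)/18) ^ \<nu> / (fact (2*\<nu>) * fact (m - \<nu>) * fact (\<nu> + m + 1)))"

definition b :: "nat \<Rightarrow> real" where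
  "b k = (if even k then e1 (k div 2) else o1 (k div 2))"

end

theory Submission
  imports Defs "HOL-Complex_Analysis.Complex_Analysis"
begin

(*
  Put u = sqrt (24 n), kappa = pi / (3 sqrt 2) and t = 1 / u. Then kappa u = 2 pi sqrt (n / 3), and
  the left-hand side is exp (kappa u) * exp (kappa * gap t) with gap t = t / (1 + sqrt (1 + t^2))
  = sqrt (u^2 + 1) - u. The t^k-coefficient of exp (a * gap t) is a polynomial in a with explicit
  coefficients: these polynomials and their a-derivatives satisfy the two coefficient recurrences
  obtained from linear ODEs for F = exp (a * gap t) and G = gap t * F = dF/da, and for a <> 0 these
  recurrences determine the Taylor coefficients of F and G. At a = kappa the k-th coefficient is
  sqrt 24 ^ k * b k. The explicit coefficients also give |coefficient| <= a e^a / k, so for k >= 5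
  the tail is dominated by a geometric series in t <= 1/16, which yields the error 12/25 t^(N+2).
*)

definition gap_term :: "nat \<Rightarrow> nat \<Rightarrow> real" where
  "gap_term j i = (-1)^i * fact (j + 2*i) / (2^(j + 2*i + 1) * fact i * fact (j + i + 1) * fact j)"

(* gap_coeff k j is the coefficient of a^j t^k in exp (a * gap t), see fps_expansion_exp_gap_nth. *)
definition gap_coeff :: "nat \<Rightarrow> nat \<Rightarrow> real" where
  "gap_coeff k j = (if j = 0 then (if k = 0 then 1 else 0)
     else if j \<le> k \<and> even (k - j) then gap_term (j - 1) ((k - j) div 2) else 0)"

lemma gap_term_0_0: "gap_term 0 0 = 1/2"
  by (simp add: gap_term_def)

lemma gap_term_rec1:
  "(2 * real i + 2) * gap_term j (Suc i) + (real j + 2 * real i + 2) * (real j + 1) * gap_term (Suc j) i = 0"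
  unfolding gap_term_def by (simp add: divide_simps) (simp add: algebra_simps)

lemma gap_term_rec2:
  "(2 * real j + 2 * real i + 6) * gap_term (Suc j) (Suc i) + (real j + 2 * real i + 2) * gap_term (Suc j) i
     = gap_term j (Suc i)"
  unfolding gap_term_def by (simp add: divide_simps) (simp add: algebra_simps)

lemma gap_term_Suc_0: "(2 * real j + 4) * gap_term (Suc j) 0 = gap_term j 0"
  unfolding gap_term_def by (simp add: divide_simps)

lemma gap_term_0_Suc: "(2 * real i + 4) * gap_term 0 (Suc i) + (2 * real i + 1) * gap_term 0 i = 0"
  unfolding gap_term_def by (simp add: divide_simps) (simp add: algebra_simps)

lemma gap_coeff_0_right [simp]: "gap_coeff k 0 = (if k = 0 then 1 else 0)"
  by (simp add: gap_coeff_def)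

lemma gap_coeff_Suc_right: "gap_coeff (Suc j + 2*i) (Suc j) = gap_term j i"
  by (simp add: gap_coeff_def)

lemma gap_coeff_eq_0:
  assumes "\<And>i. k \<noteq> Suc j + 2*i" shows "gap_coeff k (Suc j) = 0"
proof (cases "Suc j \<le> k \<and> even (k - Suc j)")
  case True
  then obtain i where "k - Suc j = 2*i" by (metis evenE)
  with True assms[of i] show ?thesis by simp
next
  case False
  then show ?thesis by (simp only: gap_coeff_def if_False nat.distinct)
qed

lemma gap_coeff_gt: "k < j \<Longrightarrow> gap_coeff k j = 0"
  by (simp add: gap_coeff_def)

lemma gap_coeff_nonzeroD: "gap_coeff k j \<noteq> 0 \<Longrightarrow> j \<le> k \<and> even (k - j) \<and> (j = 0 \<longrightarrow> k = 0)"
  unfolding gap_coeff_def by (auto split: if_splits)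

lemma gap_coeff_rec1:
  "(real (Suc k) - real j) * gap_coeff (Suc k) j + real k * real j * gap_coeff k (Suc j) = 0"
proof (cases j)
  case (Suc j')
  show ?thesis
  proof (cases "\<exists>i. Suc k = j + 2*i")
    case True
    then obtain i where k: "Suc k = j + 2*i" by blast
    show ?thesis
    proof (cases i)
      case 0
      then show ?thesis using k by (simp add: gap_coeff_gt)
    next
      case (Suc i')
      have "gap_coeff (Suc k) j = gap_term j' (Suc i')"
        using k Suc \<open>j = Suc j'\<close> gap_coeff_Suc_right[of j' "Suc i'"] by simp
      moreover have "gap_coeff k (Suc j) = gap_term (Suc j') i'"
        using k Suc \<open>j = Suc j'\<close> gap_coeff_Suc_right[of "Suc j'" i'] by simp
      ultimately show ?thesis
        using gap_term_rec1[of i' j'] k Suc \<open>j = Suc j'\<close> by (simp add: algebra_simps)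
    qed
  next
    case False
    have "k \<noteq> Suc j + 2*i" for i
      using False by (auto dest: spec[of _ "Suc i"])
    then show ?thesis using False Suc by (simp add: gap_coeff_eq_0)
  qed
qed simp

lemma gap_coeff_rec2:
  "(real k + real j + 2) * gap_coeff (Suc k) (Suc j) + (real k - 1) * gap_coeff (k - 1) (Suc j)
     = gap_coeff k j"
proof (cases "\<exists>i. k = j + 2*i")
  case True
  then obtain i where k: "k = j + 2*i" by blast
  have top: "gap_coeff (Suc k) (Suc j) = gap_term j i"
    using gap_coeff_Suc_right[of j i] k by simp
  show ?thesis
  proof (cases i)
    case 0
    then show ?thesis
      using top k gap_term_0_0 gap_term_Suc_0 gap_coeff_Suc_right[of _ 0]
      by (cases j) (auto simp: gap_coeff_gt algebra_simps)
  next
    case (Suc i')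
    have mid: "gap_coeff (k - 1) (Suc j) = gap_term j i'"
      using gap_coeff_Suc_right[of j i'] k Suc by simp
    show ?thesis
    proof (cases j)
      case 0
      then show ?thesis
        using top mid k Suc gap_term_0_Suc[of i'] by (simp add: algebra_simps)
    next
      case (Suc j')
      have "gap_coeff k j = gap_term j' (Suc i')"
        using gap_coeff_Suc_right[of j' "Suc i'"] k Suc \<open>i = Suc i'\<close> by simp
      then show ?thesis
        using top mid k Suc \<open>i = Suc i'\<close> gap_term_rec2[of j' i'] by (simp add: algebra_simps)
    qed
  qed
next
  case False
  have "gap_coeff (Suc k) (Suc j) = 0"
    by (rule gap_coeff_eq_0) (use False in auto)
  moreover have "gap_coeff (k - 1) (Suc j) = 0"
  proof (rule gap_coeff_eq_0)
    fix i
    show "k - 1 \<noteq> Suc j + 2*i"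
      using False by (auto dest: spec[of _ "Suc i"])
  qed
  moreover have "gap_coeff k j = 0"
    using False by (cases j) (auto intro: gap_coeff_eq_0 dest: spec[of _ 0])
  ultimately show ?thesis by simp
qed

definition gap_poly :: "nat \<Rightarrow> real poly" where
  "gap_poly k = (\<Sum>j\<le>k. monom (gap_coeff k j) j)"

lemma coeff_gap_poly [simp]: "coeff (gap_poly k) j = gap_coeff k j"
  unfolding gap_poly_def by (auto simp: coeff_sum coeff_monom gap_coeff_gt)

lemma poly_gap_poly: "poly (gap_poly k) a = (\<Sum>j\<le>k. gap_coeff k j * a^j)"
  unfolding gap_poly_def by (simp add: poly_sum poly_monom)

lemma gap_poly_rec1:
  "smult (real (Suc k)) (gap_poly (Suc k)) + (if k \<ge> 1 then smult (real k - 1) (gap_poly (k - 1)) else 0)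
     + pCons 0 (pderiv (gap_poly (Suc k))) = pCons 0 (gap_poly k)"
proof (rule poly_eqI)
  fix n
  show "coeff (smult (real (Suc k)) (gap_poly (Suc k))
      + (if k \<ge> 1 then smult (real k - 1) (gap_poly (k - 1)) else 0)
      + pCons 0 (pderiv (gap_poly (Suc k)))) n = coeff (pCons 0 (gap_poly k)) n"
  proof (cases n)
    case (Suc j)
    then show ?thesis
      using gap_coeff_rec2[of k j] by (auto simp: coeff_pderiv gap_coeff_gt algebra_simps)
  qed (cases "k = 1"; simp)
qed

lemma gap_poly_rec2:
  "pCons 0 (smult (real (Suc k)) (gap_poly (Suc k))) + pCons 0 (smult (real k) (pderiv (gap_poly k)))
     - smult (real k) (gap_poly k) = pCons 0 (pCons 0 (pderiv (gap_poly (Suc k))))"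
proof (rule poly_eqI)
  fix n
  show "coeff (pCons 0 (smult (real (Suc k)) (gap_poly (Suc k))) + pCons 0 (smult (real k) (pderiv (gap_poly k)))
     - smult (real k) (gap_poly k)) n = coeff (pCons 0 (pCons 0 (pderiv (gap_poly (Suc k))))) n"
  proof (cases n)
    case (Suc j)
    then show ?thesis
      using gap_coeff_rec1[of k j] by (cases j) (auto simp: coeff_pderiv algebra_simps)
  qed simp
qed

(* The coefficientwise form of exp_gap_fps_ode1 and exp_gap_fps_ode2. *)
definition gap_recurrences :: "complex \<Rightarrow> (nat \<Rightarrow> complex) \<Rightarrow> (nat \<Rightarrow> complex) \<Rightarrow> bool" where
  "gap_recurrences a P Q \<longleftrightarrow> (\<forall>k.
     of_nat (Suc k) * P (Suc k) + (if k \<ge> 1 then (of_nat k - 1) * P (k - 1) else 0) + a * Q (Suc k) = a * P k \<and>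
     a * of_nat (Suc k) * P (Suc k) + a * of_nat k * Q k - of_nat k * P k = a^2 * Q (Suc k))"

(* Since gap z * exp_gap a z is the a-derivative of exp_gap a z, its coefficients are the derivatives
   of the gap_poly. *)
lemma gap_recurrences_gap_poly:
  "gap_recurrences (of_real a) (\<lambda>k. of_real (poly (gap_poly k) a)) (\<lambda>k. of_real (poly (pderiv (gap_poly k)) a))"
  unfolding gap_recurrences_def
proof (intro allI conjI)
  fix k
  have "real (Suc k) * poly (gap_poly (Suc k)) a
      + (if k \<ge> 1 then (real k - 1) * poly (gap_poly (k - 1)) a else 0)
      + a * poly (pderiv (gap_poly (Suc k))) a = a * poly (gap_poly k) a"
    using arg_cong[OF gap_poly_rec1[of k], of "\<lambda>p. poly p a"] by (simp split: if_splits)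
  from arg_cong[OF this, of complex_of_real]
  show "of_nat (Suc k) * complex_of_real (poly (gap_poly (Suc k)) a)
      + (if k \<ge> 1 then (of_nat k - 1) * complex_of_real (poly (gap_poly (k - 1)) a) else 0)
      + of_real a * of_real (poly (pderiv (gap_poly (Suc k))) a) = of_real a * of_real (poly (gap_poly k) a)"
    by (simp split: if_splits)
  have "a * real (Suc k) * poly (gap_poly (Suc k)) a + a * real k * poly (pderiv (gap_poly k)) a
      - real k * poly (gap_poly k) a = a^2 * poly (pderiv (gap_poly (Suc k))) a"
    using arg_cong[OF gap_poly_rec2[of k], of "\<lambda>p. poly p a"] by (simp add: power2_eq_square algebra_simps)
  from arg_cong[OF this, of complex_of_real]
  show "of_real a * of_nat (Suc k) * complex_of_real (poly (gap_poly (Suc k)) a)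
      + of_real a * of_nat k * of_real (poly (pderiv (gap_poly k)) a) - of_nat k * of_real (poly (gap_poly k) a)
      = (of_real a)^2 * of_real (poly (pderiv (gap_poly (Suc k))) a)"
    by simp
qed

lemma gap_recurrences_unique:
  assumes rec: "gap_recurrences a P Q" and rec': "gap_recurrences a P' Q'" and "a \<noteq> 0"
    and "P 0 = P' 0" and "Q 0 = Q' 0"
  shows "P k = P' k \<and> Q k = Q' k"
proof (induction k rule: less_induct)
  case (less k)
  show ?case
  proof (cases k)
    case (Suc m)
    have IH: "P m = P' m" "Q m = Q' m" "P (m - 1) = P' (m - 1)"
      using less Suc by auto
    define E where "E = (if m \<ge> 1 then (of_nat m - 1) * P (m - 1) else 0)"
    note eqs = rec[unfolded gap_recurrences_def, rule_format, of m]
      rec'[unfolded gap_recurrences_def, rule_format, of m]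
    define x where "x = P k - P' k"
    define y where "y = Q k - Q' k"
    have "of_nat k * x + a * y = (of_nat k * P k + E + a * Q k) - (of_nat k * P' k + E + a * Q' k)"
      unfolding x_def y_def by (simp add: algebra_simps)
    also have "\<dots> = 0"
      using eqs IH unfolding E_def Suc by (cases m) simp_all
    finally have kx: "of_nat k * x = - (a * y)"
      by (simp add: eq_neg_iff_add_eq_0)
    have "a * (of_nat k * x) - a^2 * y
        = (a * of_nat k * P k + a * of_nat m * Q m - of_nat m * P m - a^2 * Q k)
        - (a * of_nat k * P' k + a * of_nat m * Q m - of_nat m * P m - a^2 * Q' k)"
      unfolding x_def y_def by (simp add: algebra_simps)
    also have "\<dots> = 0"
      using eqs IH unfolding Suc by simp
    finally have "a^2 * y = - (a^2 * y)"
      unfolding kx by (simp add: power2_eq_square)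
    then have "y = 0"
      using \<open>a \<noteq> 0\<close> by simp
    with kx have "x = 0"
      using Suc by (simp del: of_nat_Suc)
    with \<open>y = 0\<close> show ?thesis unfolding x_def y_def by simp
  qed (use assms in simp)
qed

(* For u > 0, gap (1 / u) = sqrt (u^2 + 1) - u. *)
definition gap :: "complex \<Rightarrow> complex" where
  "gap z = z / (1 + csqrt (1 + z^2))"

definition exp_gap :: "complex \<Rightarrow> complex \<Rightarrow> complex" where
  "exp_gap a z = exp (a * gap z)"

lemma Re_one_plus_power2_pos: "norm z < 1 \<Longrightarrow> Re (1 + z^2) > 0"
proof -
  assume "norm z < 1"
  then have "(Re z)^2 + (Im z)^2 < 1"
    by (simp add: cmod_def)
  then show ?thesis
    by (simp add: power2_eq_square) (smt (verit) zero_le_power2 power2_eq_square)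
qed

lemma csqrt_one_plus_power2_nonzero: "norm z < 1 \<Longrightarrow> csqrt (1 + z^2) \<noteq> 0"
  using Re_one_plus_power2_pos by (metis csqrt_eq_0 zero_complex.sel(1) less_irrefl)

lemma one_plus_csqrt_nonzero: "1 + csqrt w \<noteq> 0"
proof
  assume "1 + csqrt w = 0"
  then have "Re (csqrt w) = -1"
    by (simp add: add_eq_0_iff)
  with Re_csqrt[of w] show False by linarith
qed

lemma has_field_derivative_gap:
  assumes "norm z < 1"
  shows "(gap has_field_derivative 1 / (csqrt (1 + z^2) * (1 + csqrt (1 + z^2)))) (at z)"
proof -
  define s where "s = csqrt (1 + z^2)"
  have "s \<noteq> 0"
    unfolding s_def using assms by (rule csqrt_one_plus_power2_nonzero)
  have zz: "z * z = s * s - 1"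
    unfolding s_def by (simp add: power2_eq_square[symmetric])
  have "1 + z^2 \<notin> \<real>\<^sub>\<le>\<^sub>0"
    using Re_one_plus_power2_pos[OF assms] by (auto simp: complex_nonpos_Reals_iff)
  moreover have "((\<lambda>z. 1 + z^2) has_field_derivative 2 * z) (at z)"
    by (auto intro!: derivative_eq_intros)
  ultimately have "((\<lambda>z. csqrt (1 + z^2)) has_field_derivative z / s) (at z)"
    unfolding s_def using has_field_derivative_csqrt' by fastforce
  then have "((\<lambda>z. z / (1 + csqrt (1 + z^2))) has_field_derivative
      (1 * (1 + s) - z * (0 + z / s)) / ((1 + s) * (1 + s))) (at z)"
    using one_plus_csqrt_nonzero unfolding s_def by (intro DERIV_divide DERIV_add) auto
  moreover have "(1 * (1 + s) - z * (0 + z / s)) / ((1 + s) * (1 + s)) = 1 / (s * (1 + s))"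
    using \<open>s \<noteq> 0\<close> one_plus_csqrt_nonzero[of "1 + z^2"] unfolding s_def[symmetric]
    by (simp add: divide_simps zz) (simp add: algebra_simps)
  ultimately show ?thesis
    unfolding s_def gap_def[abs_def] by simp
qed

lemma has_field_derivative_exp_gap:
  assumes "norm z < 1"
  shows "(exp_gap a has_field_derivative
    a / (csqrt (1 + z^2) * (1 + csqrt (1 + z^2))) * exp_gap a z) (at z)"
  unfolding exp_gap_def[abs_def]
  by (auto intro!: derivative_eq_intros has_field_derivative_gap[OF assms])

lemma has_field_derivative_gap_exp_gap:
  assumes "norm z < 1"
  shows "((\<lambda>z. gap z * exp_gap a z) has_field_derivative
    (1 + a * gap z) / (csqrt (1 + z^2) * (1 + csqrt (1 + z^2))) * exp_gap a z) (at z)"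
  by (auto intro!: derivative_eq_intros has_field_derivative_gap[OF assms]
      has_field_derivative_exp_gap[OF assms] simp: add_divide_distrib algebra_simps)

lemma exp_gap_ode1:
  assumes "norm z < 1"
  shows "z * (1 + z^2) * deriv (exp_gap a) z = a * (z * exp_gap a z - gap z * exp_gap a z)"
proof -
  define s where "s = csqrt (1 + z^2)"
  have s: "s \<noteq> 0" "1 + s \<noteq> 0" "z * z = s * s - 1"
    using csqrt_one_plus_power2_nonzero[OF assms] one_plus_csqrt_nonzero
    unfolding s_def by (auto simp: power2_eq_square[symmetric])
  have dF: "deriv (exp_gap a) z = a / (s * (1 + s)) * exp_gap a z"
    using DERIV_imp_deriv[OF has_field_derivative_exp_gap[OF assms]] unfolding s_def .
  have g: "gap z = z / (1 + s)"
    unfolding gap_def s_def ..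
  show ?thesis
    unfolding dF g using s by (simp add: divide_simps power2_eq_square) (simp add: algebra_simps)
qed

lemma exp_gap_ode2:
  assumes "norm z < 1"
  shows "a * z * deriv (exp_gap a) z + a * z^2 * deriv (\<lambda>z. gap z * exp_gap a z) z
    - z^2 * deriv (exp_gap a) z = a^2 * (gap z * exp_gap a z)"
proof -
  define s where "s = csqrt (1 + z^2)"
  have s: "s \<noteq> 0" "1 + s \<noteq> 0" "z * z = s * s - 1"
    using csqrt_one_plus_power2_nonzero[OF assms] one_plus_csqrt_nonzero
    unfolding s_def by (auto simp: power2_eq_square[symmetric])
  have dF: "deriv (exp_gap a) z = a / (s * (1 + s)) * exp_gap a z"
    using DERIV_imp_deriv[OF has_field_derivative_exp_gap[OF assms]] unfolding s_def .
  have dG: "deriv (\<lambda>z. gap z * exp_gap a z) z = (1 + a * gap z) / (s * (1 + s)) * exp_gap a z"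
    using DERIV_imp_deriv[OF has_field_derivative_gap_exp_gap[OF assms]] unfolding s_def .
  have g: "gap z = z / (1 + s)"
    unfolding gap_def s_def ..
  show ?thesis
    unfolding dF dG g using s by (simp add: divide_simps power2_eq_square) (simp add: algebra_simps)
qed

lemma holomorphic_on_exp_gap: "exp_gap a holomorphic_on ball 0 1"
  unfolding holomorphic_on_open[OF open_ball] by (metis has_field_derivative_exp_gap mem_ball_0)

lemma holomorphic_on_gap_exp_gap: "(\<lambda>z. gap z * exp_gap a z) holomorphic_on ball 0 1"
  unfolding holomorphic_on_open[OF open_ball] by (metis has_field_derivative_gap_exp_gap mem_ball_0)

lemma fps_X_power2_deriv_nth: "(fps_X^2 * fps_deriv f) $ Suc k = of_nat k * f $ k"
  by (cases k) (simp_all add: fps_X_power_mult_nth)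

lemma has_fps_expansion_eq_near_0:
  assumes "eventually (\<lambda>z. f z = g z) (nhds 0)"
    and "f has_fps_expansion F" and "g has_fps_expansion (G :: complex fps)"
  shows "F = G"
  using has_fps_expansion_cong[OF assms(1) refl] assms(2,3) fps_expansion_unique_complex by blast

lemma eventually_norm_less_1_nhds_0: "eventually (\<lambda>z. norm z < 1) (nhds (0::complex))"
  using eventually_nhds_in_open[of "ball (0::complex) 1" 0] by simp

lemma exp_gap_fps_ode1:
  fixes a :: complex
  defines "P \<equiv> fps_expansion (exp_gap a) 0" and "Q \<equiv> fps_expansion (\<lambda>z. gap z * exp_gap a z) 0"
  shows "fps_X * (1 + fps_X^2) * fps_deriv P = fps_const a * (fps_X * P - Q)"
proof (rule has_fps_expansion_eq_near_0)
  show "eventually (\<lambda>z. z * (1 + z^2) * deriv (exp_gap a) z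
      = a * (z * exp_gap a z - gap z * exp_gap a z)) (nhds 0)"
    using eventually_norm_less_1_nhds_0 by (rule eventually_mono) (rule exp_gap_ode1)
  have P: "exp_gap a has_fps_expansion P" and Q: "(\<lambda>z. gap z * exp_gap a z) has_fps_expansion Q"
    unfolding P_def Q_def using holomorphic_on_exp_gap holomorphic_on_gap_exp_gap
    by (auto intro!: has_fps_expansion_fps_expansion[OF open_ball])
  show "(\<lambda>z. z * (1 + z^2) * deriv (exp_gap a) z) has_fps_expansion fps_X * (1 + fps_X^2) * fps_deriv P"
    by (intro has_fps_expansion_mult has_fps_expansion_add has_fps_expansion_fps_X has_fps_expansion_1
        has_fps_expansion_fps_X_power has_fps_expansion_deriv P)
  show "(\<lambda>z. a * (z * exp_gap a z - gap z * exp_gap a z)) has_fps_expansion fps_const a * (fps_X * P - Q)"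
    by (intro has_fps_expansion_cmult_left has_fps_expansion_diff has_fps_expansion_mult
        has_fps_expansion_fps_X P Q)
qed

lemma exp_gap_fps_ode2:
  fixes a :: complex
  defines "P \<equiv> fps_expansion (exp_gap a) 0" and "Q \<equiv> fps_expansion (\<lambda>z. gap z * exp_gap a z) 0"
  shows "fps_const a * fps_X * fps_deriv P + fps_const a * fps_X^2 * fps_deriv Q - fps_X^2 * fps_deriv P
    = fps_const (a^2) * Q"
proof (rule has_fps_expansion_eq_near_0)
  show "eventually (\<lambda>z. a * z * deriv (exp_gap a) z + a * z^2 * deriv (\<lambda>z. gap z * exp_gap a z) z
      - z^2 * deriv (exp_gap a) z = a^2 * (gap z * exp_gap a z)) (nhds 0)"
    using eventually_norm_less_1_nhds_0 by (rule eventually_mono) (rule exp_gap_ode2)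
  have P: "exp_gap a has_fps_expansion P" and Q: "(\<lambda>z. gap z * exp_gap a z) has_fps_expansion Q"
    unfolding P_def Q_def using holomorphic_on_exp_gap holomorphic_on_gap_exp_gap
    by (auto intro!: has_fps_expansion_fps_expansion[OF open_ball])
  show "(\<lambda>z. a * z * deriv (exp_gap a) z + a * z^2 * deriv (\<lambda>z. gap z * exp_gap a z) z
      - z^2 * deriv (exp_gap a) z) has_fps_expansion
      fps_const a * fps_X * fps_deriv P + fps_const a * fps_X^2 * fps_deriv Q - fps_X^2 * fps_deriv P"
    by (intro has_fps_expansion_mult has_fps_expansion_add has_fps_expansion_diff has_fps_expansion_fps_X
        has_fps_expansion_const has_fps_expansion_fps_X_power has_fps_expansion_deriv P Q)
  show "(\<lambda>z. a^2 * (gap z * exp_gap a z)) has_fps_expansion fps_const (a^2) * Q"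
    by (intro has_fps_expansion_cmult_left Q)
qed

lemma gap_recurrences_exp_gap:
  "gap_recurrences a (\<lambda>k. fps_expansion (exp_gap a) 0 $ k)
     (\<lambda>k. fps_expansion (\<lambda>z. gap z * exp_gap a z) 0 $ k)"
  unfolding gap_recurrences_def
proof (intro allI conjI)
  fix k
  define P where "P = fps_expansion (exp_gap a) 0"
  define Q where "Q = fps_expansion (\<lambda>z. gap z * exp_gap a z) 0"
  have "(fps_X * (1 + fps_X^2) * fps_deriv P) $ Suc k = of_nat (Suc k) * P $ Suc k
      + (if k \<ge> 1 then (of_nat k - 1) * P $ (k - 1) else 0)"
    by (cases k) (simp_all add: mult.assoc distrib_right fps_X_power2_deriv_nth del: power_Suc)
  then show "of_nat (Suc k) * P $ Suc k + (if k \<ge> 1 then (of_nat k - 1) * P $ (k - 1) else 0)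
      + a * Q $ Suc k = a * P $ k"
    using arg_cong[OF exp_gap_fps_ode1, of "\<lambda>f. f $ Suc k" a] unfolding P_def Q_def
    by (simp add: algebra_simps)
  show "a * of_nat (Suc k) * P $ Suc k + a * of_nat k * Q $ k - of_nat k * P $ k = a^2 * Q $ Suc k"
    using arg_cong[OF exp_gap_fps_ode2, of "\<lambda>f. f $ Suc k" a] unfolding P_def Q_def
    by (simp add: mult.assoc fps_X_power2_deriv_nth del: power_Suc)
qed

lemma fps_expansion_exp_gap_nth:
  assumes "a \<noteq> 0"
  shows "fps_expansion (exp_gap (of_real a)) 0 $ k = of_real (poly (gap_poly k) a)"
proof -
  have "gap 0 = 0" "gap_poly 0 = 1"
    by (simp_all add: gap_def gap_poly_def)
  then have P0: "fps_expansion (exp_gap (of_real a)) 0 $ 0 = of_real (poly (gap_poly 0) a)"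
    and Q0: "fps_expansion (\<lambda>z. gap z * exp_gap (of_real a) z) 0 $ 0 = of_real (poly (pderiv (gap_poly 0)) a)"
    by (simp_all add: fps_expansion_def exp_gap_def)
  note U = gap_recurrences_unique[OF gap_recurrences_exp_gap gap_recurrences_gap_poly _ P0 Q0]
  have "complex_of_real a \<noteq> 0"
    using assms by simp
  from conjunct1[OF U[OF this]] show ?thesis .
qed

lemma gap_poly_sums:
  fixes a t :: real
  assumes "a \<noteq> 0" and "\<bar>t\<bar> < 1"
  shows "(\<lambda>k. poly (gap_poly k) a * t^k) sums exp (a * (t / (1 + sqrt (1 + t^2))))"
proof -
  have "(\<lambda>k. (deriv ^^ k) (exp_gap (of_real a)) 0 / fact k * (of_real t - 0) ^ k)
      sums exp_gap (of_real a) (of_real t)"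
    using assms(2) by (intro holomorphic_power_series[where r = 1] holomorphic_on_exp_gap) simp
  moreover have "(deriv ^^ k) (exp_gap (of_real a)) 0 / fact k = of_real (poly (gap_poly k) a)" for k
    using fps_expansion_exp_gap_nth[OF assms(1), of k] by (simp add: fps_expansion_def)
  moreover have "csqrt (1 + (of_real t)^2) = of_real (sqrt (1 + t^2))"
  proof -
    have "1 + (complex_of_real t)^2 = of_real (1 + t^2)"
      by simp
    then show ?thesis
      by (simp del: of_real_add of_real_power)
  qed
  ultimately have "(\<lambda>k. of_real (poly (gap_poly k) a * t^k))
      sums (of_real (exp (a * (t / (1 + sqrt (1 + t^2))))) :: complex)"
    by (simp add: exp_gap_def gap_def flip: exp_of_real)
  then show ?thesis
    by (simp only: sums_of_real_iff)
qed

lemma gap_poly_sums_sqrt_diff: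
  assumes "a \<noteq> 0" and "1 < u"
  shows "(\<lambda>k. poly (gap_poly k) a * (1 / u)^k) sums exp (a * (sqrt (u^2 + 1) - u))"
proof -
  define s where "s = sqrt (u^2 + 1)"
  have "0 < s" "s * s = u^2 + 1"
    unfolding s_def by (simp_all add: add_pos_nonneg zero_le_power2 add_nonneg_pos)
  then have "1 + (1 / u)^2 = (s / u)^2"
    using assms(2) by (simp add: field_simps power2_eq_square)
  then have "sqrt (1 + (1 / u)^2) = s / u"
    using \<open>0 < s\<close> assms(2) by simp
  moreover have "(s - u) * (s + u) = 1"
    using \<open>s * s = u^2 + 1\<close> by (simp add: algebra_simps power2_eq_square)
  ultimately have "(1 / u) / (1 + sqrt (1 + (1 / u)^2)) = s - u"
    using \<open>0 < s\<close> assms(2) by (simp add: field_simps)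
  then show ?thesis
    using gap_poly_sums[OF assms(1), of "1 / u"] assms(2) unfolding s_def by simp
qed

lemma abs_gap_term_le: "\<bar>gap_term j i\<bar> \<le> 1 / (real (Suc j + 2*i) * fact j)"
proof -
  define k where "k = Suc j + 2*i"
  have "fact k = real k * fact (j + 2*i)" "k - i = j + i + 1" "i \<le> k" "0 < k" "j + 2*i + 1 = k"
    unfolding k_def by simp_all
  have "real (k choose i) = real k * fact (j + 2*i) / (fact i * fact (j + i + 1))"
    using binomial_fact[of i k, where 'a = real] \<open>fact k = _\<close> \<open>k - i = _\<close> \<open>i \<le> k\<close> by simp
  then have "fact (j + 2*i) / (fact i * fact (j + i + 1)) = real (k choose i) / real k"
    using \<open>0 < k\<close> by simp
  also have "\<dots> \<le> 2^k / real k"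
    using binomial_le_pow2[of k i] by (intro divide_right_mono) (simp flip: of_nat_power)+
  finally have bound: "fact (j + 2*i) / (fact i * fact (j + i + 1)) \<le> 2^k / real k" .
  have "\<bar>gap_term j i\<bar> = (fact (j + 2*i) / (fact i * fact (j + i + 1))) / (2^k * fact j)"
    unfolding gap_term_def \<open>j + 2*i + 1 = k\<close>
    by (simp add: abs_mult power_abs del: fact_Suc)
  also have "\<dots> \<le> (2^k / real k) / (2^k * fact j)"
    using bound by (rule divide_right_mono) simp
  finally show ?thesis
    unfolding k_def by simp
qed

lemma abs_gap_coeff_le: "\<bar>gap_coeff k (Suc j)\<bar> \<le> 1 / (real k * fact j)"
proof (cases "\<exists>i. k = Suc j + 2*i")
  case True
  then show ?thesis
    using abs_gap_term_le gap_coeff_Suc_right by auto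
qed (simp add: gap_coeff_eq_0)

lemma sum_power_div_fact_le_exp: "0 \<le> a \<Longrightarrow> (\<Sum>j\<le>n. a^j / fact j) \<le> exp (a::real)"
  using exp_converges[of a] sum_le_suminf[of "\<lambda>j. a^j / fact j" "{..n}"]
  by (simp add: sums_iff divide_inverse mult.commute)

lemma abs_poly_gap_poly_le:
  assumes "0 \<le> a" and "1 \<le> k"
  shows "\<bar>poly (gap_poly k) a\<bar> \<le> a * exp a / real k"
proof -
  obtain n where k: "k = Suc n"
    using assms(2) by (cases k) auto
  have "\<bar>poly (gap_poly k) a\<bar> = \<bar>\<Sum>j\<le>n. gap_coeff k (Suc j) * a^(Suc j)\<bar>"
    unfolding poly_gap_poly k sum.atMost_Suc_shift by simp
  also have "\<dots> \<le> (\<Sum>j\<le>n. \<bar>gap_coeff k (Suc j) * a^(Suc j)\<bar>)"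
    by (rule sum_abs)
  also have "\<dots> \<le> (\<Sum>j\<le>n. a^(Suc j) / (real k * fact j))"
  proof (rule sum_mono)
    fix j
    have "\<bar>gap_coeff k (Suc j)\<bar> * a^(Suc j) \<le> 1 / (real k * fact j) * a^(Suc j)"
      using abs_gap_coeff_le assms(1) by (intro mult_right_mono) auto
    then show "\<bar>gap_coeff k (Suc j) * a^(Suc j)\<bar> \<le> a^(Suc j) / (real k * fact j)"
      using assms(1) by (simp add: abs_mult)
  qed
  also have "\<dots> = a / real k * (\<Sum>j\<le>n. a^j / fact j)"
    by (simp add: sum_distrib_left field_simps)
  also have "\<dots> \<le> a / real k * exp a"
    using assms by (intro mult_left_mono sum_power_div_fact_le_exp) auto
  finally show ?thesis
    by simp
qed

lemma sums_tail_abs_le: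
  fixes c :: "nat \<Rightarrow> real"
  assumes "0 \<le> t" "t < 1" and bound: "\<And>k. K \<le> k \<Longrightarrow> \<bar>c k\<bar> \<le> C"
    and tail: "(\<lambda>i. c (i + K) * t^(i + K)) sums E"
  shows "\<bar>E\<bar> \<le> C * t^K / (1 - t)"
proof -
  have "(\<lambda>i. C * t^K * t^i) sums (C * t^K * (1 / (1 - t)))"
    using assms(1,2) by (intro sums_mult geometric_sums) simp
  moreover have "norm (c (i + K) * t^(i + K)) \<le> C * t^K * t^i" for i
  proof -
    have "\<bar>c (i + K)\<bar> * (t^K * t^i) \<le> C * (t^K * t^i)"
      using bound[of "i + K"] assms(1) by (intro mult_right_mono) auto
    then show ?thesis
      using assms(1) by (simp add: abs_mult power_add mult_ac)
  qed
  ultimately show ?thesis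
    using norm_sums_le[OF tail] by simp
qed

lemma poly_gap_poly_even:
  assumes "1 \<le> m"
  shows "poly (gap_poly (2*m)) x = (\<Sum>\<nu>=1..m. gap_term (2*\<nu> - 1) (m - \<nu>) * x^(2*\<nu>))"
proof -
  have "poly (gap_poly (2*m)) x = (\<Sum>j\<in>(\<lambda>\<nu>. 2*\<nu>) ` {1..m}. gap_coeff (2*m) j * x^j)"
    unfolding poly_gap_poly
  proof (rule sum.mono_neutral_right)
    have "j \<in> (\<lambda>\<nu>. 2*\<nu>) ` {1..m}" if "gap_coeff (2*m) j \<noteq> 0" for j
    proof -
      from gap_coeff_nonzeroD[OF that] assms have "j \<le> 2*m" "even j" "j \<noteq> 0"
        by auto
      then show ?thesis
        by (auto elim!: evenE)
    qed
    then show "\<forall>j\<in>{..2*m} - (\<lambda>\<nu>. 2*\<nu>) ` {1..m}. gap_coeff (2*m) j * x^j = 0"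
      by auto
  qed auto
  also have "\<dots> = (\<Sum>\<nu>=1..m. gap_coeff (2*m) (2*\<nu>) * x^(2*\<nu>))"
    by (simp add: sum.reindex inj_on_def)
  also have "\<dots> = (\<Sum>\<nu>=1..m. gap_term (2*\<nu> - 1) (m - \<nu>) * x^(2*\<nu>))"
  proof (rule sum.cong)
    fix \<nu> assume "\<nu> \<in> {1..m}"
    then have "2*m = Suc (2*\<nu> - 1) + 2*(m - \<nu>)" "2*\<nu> = Suc (2*\<nu> - 1)"
      by auto
    then show "gap_coeff (2*m) (2*\<nu>) * x^(2*\<nu>) = gap_term (2*\<nu> - 1) (m - \<nu>) * x^(2*\<nu>)"
      by (metis gap_coeff_Suc_right)
  qed simp
  finally show ?thesis .
qed

lemma poly_gap_poly_odd:
  "poly (gap_poly (2*m + 1)) x = (\<Sum>\<nu>=0..m. gap_term (2*\<nu>) (m - \<nu>) * x^(2*\<nu> + 1))"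
proof -
  have "poly (gap_poly (2*m + 1)) x = (\<Sum>j\<in>(\<lambda>\<nu>. 2*\<nu> + 1) ` {0..m}. gap_coeff (2*m + 1) j * x^j)"
    unfolding poly_gap_poly
  proof (rule sum.mono_neutral_right)
    have "j \<in> (\<lambda>\<nu>. 2*\<nu> + 1) ` {0..m}" if "gap_coeff (2*m + 1) j \<noteq> 0" for j
    proof -
      from gap_coeff_nonzeroD[OF that] have "j \<le> 2*m + 1" "odd j"
        by auto
      then show ?thesis
        by (auto elim!: oddE)
    qed
    then show "\<forall>j\<in>{..2*m + 1} - (\<lambda>\<nu>. 2*\<nu> + 1) ` {0..m}. gap_coeff (2*m + 1) j * x^j = 0"
      by auto
  qed auto
  also have "\<dots> = (\<Sum>\<nu>=0..m. gap_coeff (2*m + 1) (2*\<nu> + 1) * x^(2*\<nu> + 1))"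
    by (simp add: sum.reindex inj_on_def)
  also have "\<dots> = (\<Sum>\<nu>=0..m. gap_term (2*\<nu>) (m - \<nu>) * x^(2*\<nu> + 1))"
  proof (rule sum.cong)
    fix \<nu> assume "\<nu> \<in> {0..m}"
    then have "2*m + 1 = Suc (2*\<nu>) + 2*(m - \<nu>)"
      by auto
    then show "gap_coeff (2*m + 1) (2*\<nu> + 1) * x^(2*\<nu> + 1) = gap_term (2*\<nu>) (m - \<nu>) * x^(2*\<nu> + 1)"
      by (metis gap_coeff_Suc_right Suc_eq_plus1)
  qed simp
  finally show ?thesis .
qed

lemma power_neg_96: "(-96::real)^m = (-1)^m * (24^m * 4^m)"
  by (induction m) simp_all

lemma inverse_neg_one_power: "inverse ((-1::real)^m) = (-1)^m"
  by (induction m) simp_all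

lemma divide_power_neg_96: "y / (-96::real)^m = (-1)^m * y / (24^m * 4^m)"
  unfolding power_neg_96 divide_inverse inverse_mult_distrib inverse_neg_one_power by (simp only: ac_simps)

lemma neg_power2_power: "(-(x^2))^\<nu> = (-1)^\<nu> * (x::real)^(2*\<nu>)"
proof -
  have "-(x^2) = (-1) * x^2" by simp
  then show ?thesis by (simp only: power_mult_distrib power_mult)
qed

lemma neg_one_power_diff:
  assumes "\<nu> \<le> m" shows "(-1::real)^(m - \<nu>) = (-1)^m * (-1)^\<nu>"
proof -
  have "(-1::real)^m = (-1)^(m - \<nu>) * (-1)^\<nu>"
    using assms by (simp flip: power_add)
  then have "(-1::real)^m * (-1)^\<nu> = (-1)^(m - \<nu>) * ((-1)^\<nu> * (-1)^\<nu>)"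
    by (simp only: mult.assoc)
  also have "\<dots> = (-1)^(m - \<nu>)"
    by (simp flip: power_mult_distrib)
  finally show ?thesis ..
qed

lemma gap_term_even_eq:
  fixes x :: real
  assumes "1 \<le> \<nu>" "\<nu> \<le> m"
  shows "gap_term (2*\<nu> - 1) (m - \<nu>) * x^(2*\<nu>)
    = 24^m * (fact (2*m - 1) / (-96)^m * ((-(x^2))^\<nu> / (fact (2*\<nu> - 1) * fact (\<nu> + m) * fact (m - \<nu>))))"
proof -
  have "2*\<nu> - 1 + 2*(m - \<nu>) = 2*m - 1" "2*m - 1 + 1 = 2*m" "2*\<nu> - 1 + (m - \<nu>) + 1 = \<nu> + m"
    using assms by auto
  then have G: "gap_term (2*\<nu> - 1) (m - \<nu>)
      = (-1)^m * (-1)^\<nu> * fact (2*m - 1) / (2^(2*m) * fact (m - \<nu>) * fact (\<nu> + m) * fact (2*\<nu> - 1))"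
    unfolding gap_term_def neg_one_power_diff[OF assms(2)] by (simp only:)
  show ?thesis
    unfolding divide_power_neg_96 neg_power2_power G power_mult by (simp add: divide_simps del: fact_Suc)
qed

lemma gap_term_odd_eq:
  fixes x :: real
  assumes "\<nu> \<le> m"
  shows "gap_term (2*\<nu>) (m - \<nu>) * x^(2*\<nu> + 1)
    = 24^m * x / 2 * (fact (2*m) / (-96)^m * ((-(x^2))^\<nu> / (fact (2*\<nu>) * fact (m - \<nu>) * fact (\<nu> + m + 1))))"
proof -
  have "2*\<nu> + 2*(m - \<nu>) = 2*m" "2*\<nu> + (m - \<nu>) + 1 = \<nu> + m + 1"
    using assms by auto
  then have G: "gap_term (2*\<nu>) (m - \<nu>)
      = (-1)^m * (-1)^\<nu> * fact (2*m) / (2^(2*m + 1) * fact (m - \<nu>) * fact (\<nu> + m + 1) * fact (2*\<nu>))"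
    unfolding gap_term_def neg_one_power_diff[OF assms] by (simp only:)
  show ?thesis
    unfolding divide_power_neg_96 neg_power2_power G power_add power_one_right power_mult
    by (simp add: divide_simps del: fact_Suc)
qed

definition kappa :: real where
  "kappa = pi / (3 * sqrt 2)"

lemma kappa_pos: "0 < kappa"
  unfolding kappa_def by simp

lemma kappa_power2: "kappa^2 = pi^2 / 18"
  unfolding kappa_def by (simp add: power_divide power_mult_distrib)

lemma sqrt_24_pi: "sqrt 24 * pi / (24 * sqrt 3) = kappa / 2"
proof -
  have "sqrt 24 = sqrt (4 * (2 * 3::real))"
    by simp
  also have "\<dots> = 2 * sqrt 2 * sqrt 3"
    by (simp only: real_sqrt_mult real_sqrt_four mult.assoc)
  finally have "sqrt 24 = 2 * sqrt 2 * sqrt 3" .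
  moreover have "sqrt 2 * sqrt 2 = (2::real)"
    by simp
  ultimately show ?thesis
    unfolding kappa_def by (simp add: field_simps)
qed

lemma poly_gap_poly_kappa: "poly (gap_poly k) kappa = sqrt 24 ^ k * b k"
proof (cases "even k")
  case True
  then obtain m where k: "k = 2*m"
    by (auto elim: evenE)
  have s: "sqrt 24 ^ (2*m) = (24::real)^m"
    by (simp add: power_mult)
  show ?thesis
  proof (cases "m = 0")
    case False
    then have "poly (gap_poly k) kappa = (\<Sum>\<nu>=1..m. gap_term (2*\<nu> - 1) (m - \<nu>) * kappa^(2*\<nu>))"
      unfolding k by (simp add: poly_gap_poly_even)
    also have "\<dots> = (\<Sum>\<nu>=1..m. 24^m * (fact (2*m - 1) / (-96)^m
        * ((-(kappa^2))^\<nu> / (fact (2*\<nu> - 1) * fact (\<nu> + m) * fact (m - \<nu>)))))"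
      by (rule sum.cong[OF refl], rule gap_term_even_eq) auto
    finally show ?thesis
      using False unfolding k s b_def e1_def kappa_power2 by (simp add: sum_distrib_left)
  qed (simp add: k b_def e1_def gap_poly_def)
next
  case False
  then obtain m where k: "k = 2*m + 1"
    by (auto elim: oddE)
  have s: "sqrt 24 ^ (2*m + 1) = (24::real)^m * sqrt 24"
    by (simp add: power_mult)
  have "poly (gap_poly k) kappa = (\<Sum>\<nu>=0..m. gap_term (2*\<nu>) (m - \<nu>) * kappa^(2*\<nu> + 1))"
    unfolding k by (rule poly_gap_poly_odd)
  also have "\<dots> = (\<Sum>\<nu>=0..m. 24^m * kappa / 2 * (fact (2*m) / (-96)^m
      * ((-(kappa^2))^\<nu> / (fact (2*\<nu>) * fact (m - \<nu>) * fact (\<nu> + m + 1)))))"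
    by (rule sum.cong[OF refl], rule gap_term_odd_eq) auto
  also have "\<dots> = 24^m * (sqrt 24 * pi / (24 * sqrt 3)) * (fact (2*m) / (-96)^m *
      (\<Sum>\<nu>=0..m. (-(pi^2)/18)^\<nu> / (fact (2*\<nu>) * fact (m - \<nu>) * fact (\<nu> + m + 1))))"
    unfolding sqrt_24_pi kappa_power2 by (simp add: sum_distrib_left mult_ac)
  finally show ?thesis
    unfolding k s b_def o1_def by (simp add: field_simps)
qed

lemma kappa_le: "kappa \<le> 3/4"
proof -
  have "1.4 \<le> sqrt (2::real)"
    by (rule real_le_rsqrt) (simp add: power2_eq_square)
  then have "pi / (3 * sqrt 2) \<le> 3.15 / (3 * 1.4)"
    using pi_approx by (intro frac_le) auto
  then show ?thesis
    unfolding kappa_def by simp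
qed

lemma abs_poly_gap_poly_kappa_le: "5 \<le> k \<Longrightarrow> \<bar>poly (gap_poly k) kappa\<bar> \<le> 9/20"
proof -
  assume "5 \<le> k"
  have "exp kappa \<le> 3"
    using kappa_le exp_le order_trans[of "exp kappa" "exp 1" 3] by simp
  then have "kappa * exp kappa \<le> 3/4 * 3"
    using kappa_le kappa_pos by (intro mult_mono) auto
  then have "kappa * exp kappa / real k \<le> (9/4) / 5"
    using \<open>5 \<le> k\<close> kappa_pos by (intro frac_le) auto
  moreover have "\<bar>poly (gap_poly k) kappa\<bar> \<le> kappa * exp kappa / real k"
    using kappa_pos \<open>5 \<le> k\<close> by (intro abs_poly_gap_poly_le) auto
  ultimately show ?thesis
    by linarith
qed

lemma exp_kappa_sqrt_diff_approx:
  assumes "16 \<le> u" and "5 \<le> K"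
  shows "\<bar>exp (kappa * (sqrt (u^2 + 1) - u)) - (\<Sum>k<K. sqrt 24 ^ k * b k / u^k)\<bar> \<le> 12/25 / u^K"
proof -
  define t where "t = 1 / u"
  have t: "0 < t" "t \<le> 1/16"
    using assms(1) by (simp_all add: t_def field_simps)
  have "(\<lambda>k. poly (gap_poly k) kappa * t^k) sums exp (kappa * (sqrt (u^2 + 1) - u))"
    unfolding t_def using kappa_pos assms(1) by (intro gap_poly_sums_sqrt_diff) auto
  from sums_split_initial_segment[OF this, of K]
  have "\<bar>exp (kappa * (sqrt (u^2 + 1) - u)) - (\<Sum>k<K. poly (gap_poly k) kappa * t^k)\<bar> \<le> 9/20 * t^K / (1 - t)"
    by (rule sums_tail_abs_le[rotated 3]) (use t abs_poly_gap_poly_kappa_le assms(2) in auto)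
  also have "\<dots> \<le> 9/20 * t^K / (15/16)"
    using t by (intro divide_left_mono) auto
  finally show ?thesis
    by (simp add: t_def poly_gap_poly_kappa power_divide)
qed

lemma nN_ge_16: assumes "3 \<le> N" shows "16 \<le> nN N"
proof -
  have "exp 1 \<le> (26::real)"
    using exp_le by simp
  then have "1 \<le> ln (6 * real N + 8)"
    using assms by (subst ln_ge_iff) auto
  then have "3 * 13 * 1 \<le> 3 * (3 * real N + 4) * ln (6 * real N + 8)"
    using assms by (intro mult_mono) auto
  then have "2 \<le> 3 * (3 * real N + 4) * ln (6 * real N + 8) / 1.3^2"
    by (simp add: field_simps power2_eq_square)
  then have "2^4 \<le> (3 * (3 * real N + 4) * ln (6 * real N + 8) / 1.3^2)^4"
    by (intro power_mono) auto
  then show ?thesis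
    unfolding nN_def by simp
qed

lemma powr_half_nat: "0 < y \<Longrightarrow> y powr (real m / 2) = sqrt y ^ m"
  by (simp add: powr_half_sqrt[symmetric] powr_realpow[symmetric] powr_powr)

lemma kappa_sqrt_24: "0 \<le> x \<Longrightarrow> kappa * sqrt (24 * x) = 2 * pi * sqrt (x / 3)"
proof -
  assume "0 \<le> x"
  have "sqrt (24 * x) = sqrt (36 * 2 * (x / 3))"
    by simp
  also have "\<dots> = 6 * sqrt 2 * sqrt (x / 3)"
    by (simp only: real_sqrt_mult) simp
  finally show ?thesis
    unfolding kappa_def by simp
qed

lemma remainder_bound_eq:
  assumes "0 < x"
  shows "12/25 / (sqrt 24 * sqrt x)^(N + 2)
    = 2 * 10 powr (-2) / 24 powr (real N / 2) * x powr (-(real N + 2) / 2)"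
proof -
  have "x powr (real (N + 2) / 2) = sqrt x ^ (N + 2)"
    using assms by (rule powr_half_nat)
  moreover have "x powr (-(real N + 2) / 2) = 1 / x powr (real (N + 2) / 2)"
    by (simp add: powr_minus_divide[symmetric] minus_divide_left add.commute)
  ultimately have "x powr (-(real N + 2) / 2) = 1 / sqrt x ^ (N + 2)"
    by metis
  moreover have "24 powr (real N / 2) = sqrt 24 ^ N"
    by (rule powr_half_nat) simp
  moreover have "(10::real) powr (-2) = 1 / 100"
    by (simp add: powr_minus_divide powr_numeral)
  moreover have "(sqrt 24 * sqrt x)^(N + 2) = 24 * sqrt 24 ^ N * sqrt x ^ (N + 2)"
    by (simp add: power_mult_distrib power_add)
  ultimately show ?thesis
    by (simp only:) (simp add: field_simps)
qed

theorem lemma3p12: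
  fixes N n :: nat
  assumes "N \<ge> 3" and "real n \<ge> nN N"
  shows "\<exists>E::real. \<bar>E\<bar> \<le> (2 * 10 powr (-2)) / (24 powr (real N / 2)) * real n powr (-(real N + 2) / 2)
     \<and> exp (pi * sqrt (24 * real n + 1) / (3 * sqrt 2)) =
         exp (2 * pi * sqrt (real n / 3)) * ((\<Sum>m=0..N+1. b m / real n powr (real m / 2)) + E)"
proof -
  define x where "x = real n"
  define u where "u = sqrt (24 * x)"
  have "16 \<le> x"
    using nN_ge_16[OF assms(1)] assms(2) unfolding x_def by simp
  then have "16 \<le> u" "u^2 + 1 = 24 * x + 1"
    unfolding u_def by (auto intro: real_le_rsqrt simp: power2_eq_square)
  have "u = sqrt 24 * sqrt x"
    unfolding u_def by (simp add: real_sqrt_mult)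
  define E where "E = exp (kappa * (sqrt (u^2 + 1) - u)) - (\<Sum>k<N+2. sqrt 24 ^ k * b k / u^k)"
  have "\<bar>E\<bar> \<le> 12/25 / u^(N+2)"
    unfolding E_def using \<open>16 \<le> u\<close> assms(1) by (intro exp_kappa_sqrt_diff_approx) auto
  also have "\<dots> = (2 * 10 powr (-2)) / (24 powr (real N / 2)) * x powr (-(real N + 2) / 2)"
    unfolding \<open>u = sqrt 24 * sqrt x\<close> using \<open>16 \<le> x\<close> by (intro remainder_bound_eq) simp
  finally have "\<bar>E\<bar> \<le> \<dots>" .
  moreover have "(\<Sum>k<N+2. sqrt 24 ^ k * b k / u^k) = (\<Sum>m=0..N+1. b m / x powr (real m / 2))"
    using \<open>16 \<le> x\<close> unfolding \<open>u = sqrt 24 * sqrt x\<close>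
    by (intro sum.cong) (auto simp: powr_half_nat power_mult_distrib)
  moreover have "exp (pi * sqrt (24 * x + 1) / (3 * sqrt 2)) = exp (kappa * u) * exp (kappa * (sqrt (u^2 + 1) - u))"
    unfolding \<open>u^2 + 1 = 24 * x + 1\<close> by (simp add: kappa_def field_simps flip: exp_add)
  ultimately show ?thesis
    unfolding x_def u_def kappa_sqrt_24[OF of_nat_0_le_iff] E_def by auto
qed

end
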